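(* Under the hypotheses of Theorem 1 (convex $f_i$ with subgradients bounded by $L$, closed convex $\Omega$, $W$ nonnegative doubly stochastic with positive diagonal and strongly connected positive-entry graph, second-largest singular value $\sigma<1$; positive nonincreasing step-sizes $\alpha(t)$, square summable but not summable, with $\sum_{k=1}^t\alpha(k)\le C_\alpha\sum_{k=\lceil t/2\rceil}^t\alpha(k)$ and $\alpha(\lfloor t/2\rfloor)\le C_\alpha'\alpha(t)$ for all $t$; iteration $x(t+1)=W P_\Omega[x(t)-\alpha(t)g(t)]$ with identical initial rows in $\Omega$), there is an absolute constant $c>0$ such that for all $t$ with $$t\ge\frac{c}{1-\sigma}\log\frac{(1-\sigma)\,t\,\alpha_{\max}}{C_\alpha'\alpha(t)}$$ we have $$\|x(t)-\mathbf 1\overline{x}(t)\|_F\le\frac{2C_\alpha'\alpha(t)L\sqrt n}{1-\sigma}.$$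
   Context: $x(t)$ is the $n\times d$ matrix with rows $x_i(t)$; $g(t)$ has rows $g_i(t)$, a subgradient of $f_i$ at $x_i(t)$; $P_\Omega$ is row-wise Euclidean projection onto $\Omega$; $\overline{x}(t)=\frac1n\sum_i x_i(t)$ (a row vector), $\mathbf 1$ is the all-ones column vector in $\mathbb{R}^n$, so $\mathbf 1\overline{x}(t)$ is $n\times d$; $\|\cdot\|_F$ is the Frobenius norm; $\alpha_{\max}=\max_t\alpha(t)$. *)

theory Defs
  imports Complex_Main "Jordan_Normal_Form.Char_Poly" "HOL-Computational_Algebra.Polynomial"
begin

text \<open>Rows of the n x d iterate matrices are vectors of R^d, represented as real vec of
  dimension d (Jordan_Normal_Form). The number of agents n and the dimension d are
  natural numbers, so that the constant c can be stated independently of them.\<close>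

definition vnorm :: "real vec \<Rightarrow> real" where
  "vnorm v = sqrt (v \<bullet> v)"

definition frob :: "real mat \<Rightarrow> real" where
  "frob A = sqrt (\<Sum>i<dim_row A. \<Sum>k<dim_col A. (A $$ (i,k))^2)"

definition convex_vset :: "nat \<Rightarrow> real vec set \<Rightarrow> bool" where
  "convex_vset d S \<longleftrightarrow> S \<subseteq> carrier_vec d \<and>
     (\<forall>u\<in>S. \<forall>v\<in>S. \<forall>\<theta>::real. 0 \<le> \<theta> \<and> \<theta> \<le> 1 \<longrightarrow> \<theta> \<cdot>\<^sub>v u + (1 - \<theta>) \<cdot>\<^sub>v v \<in> S)"

definition closed_vset :: "nat \<Rightarrow> real vec set \<Rightarrow> bool" where
  "closed_vset d S \<longleftrightarrow> S \<subseteq> carrier_vec d \<and>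
     (\<forall>s v. (\<forall>k. s k \<in> S) \<and> v \<in> carrier_vec d \<and> (\<lambda>k. vnorm (s k - v)) \<longlonglongrightarrow> 0 \<longrightarrow> v \<in> S)"

definition convex_vfun :: "nat \<Rightarrow> (real vec \<Rightarrow> real) \<Rightarrow> bool" where
  "convex_vfun d h \<longleftrightarrow>
     (\<forall>u\<in>carrier_vec d. \<forall>v\<in>carrier_vec d. \<forall>\<theta>::real. 0 \<le> \<theta> \<and> \<theta> \<le> 1 \<longrightarrow>
        h (\<theta> \<cdot>\<^sub>v u + (1 - \<theta>) \<cdot>\<^sub>v v) \<le> \<theta> * h u + (1 - \<theta>) * h v)"

definition subgrad :: "nat \<Rightarrow> (real vec \<Rightarrow> real) \<Rightarrow> real vec \<Rightarrow> real vec \<Rightarrow> bool" where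
  "subgrad d h u s \<longleftrightarrow> s \<in> carrier_vec d \<and>
     (\<forall>y\<in>carrier_vec d. h y \<ge> h u + s \<bullet> (y - u))"

definition proj :: "real vec set \<Rightarrow> real vec \<Rightarrow> real vec" where
  "proj S v = (SOME p. p \<in> S \<and> (\<forall>q\<in>S. vnorm (v - p) \<le> vnorm (v - q)))"

definition singular_values :: "real mat \<Rightarrow> real multiset" where
  "singular_values A = image_mset sqrt (proots (char_poly (transpose_mat A * A)))"

text \<open>Second-largest singular value (0 if there is no second one, i.e. for 1 x 1 matrices).\<close>
definition second_singular_value :: "real mat \<Rightarrow> real" where
  "second_singular_value A =
     (let l = rev (sorted_list_of_multiset (singular_values A)) in
      if length l \<ge> 2 then l ! 1 else 0)"

definition doubly_stochastic_pos :: "nat \<Rightarrow> real mat \<Rightarrow> bool" where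
  "doubly_stochastic_pos n W \<longleftrightarrow> W \<in> carrier_mat n n \<and>
     (\<forall>i<n. \<forall>j<n. W $$ (i,j) \<ge> 0) \<and>
     (\<forall>i<n. (\<Sum>j<n. W $$ (i,j)) = 1) \<and>
     (\<forall>j<n. (\<Sum>i<n. W $$ (i,j)) = 1) \<and>
     (\<forall>i<n. W $$ (i,i) > 0)"

definition strongly_connected_mat :: "nat \<Rightarrow> real mat \<Rightarrow> bool" where
  "strongly_connected_mat n W \<longleftrightarrow>
     (\<forall>i<n. \<forall>j<n. (i,j) \<in> {(a,b). a < n \<and> b < n \<and> W $$ (a,b) > 0}\<^sup>*)"

text \<open>The matrix 1 xbar(t): every row equals the average of the rows of X.\<close>
definition avg_mat :: "real mat \<Rightarrow> real mat" where
  "avg_mat X = mat (dim_row X) (dim_col X)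
     (\<lambda>(i,k). (1 / real (dim_row X)) * (\<Sum>j<dim_row X. X $$ (j,k)))"

end

theory Submission
  imports Defs "Jordan_Normal_Form.Schur_Decomposition" "HOL-Analysis.L2_Norm"
begin

text \<open>Let \<open>e(t)\<close> be the Frobenius distance of \<open>x(t)\<close> to consensus. Multiplying by the doubly
  stochastic \<open>W\<close> preserves column means and contracts mean-zero vectors by the second singular
  value \<open>\<sigma>\<close>, projection onto \<open>\<Omega>\<close> is nonexpansive, and the subgradient step moves every row by at
  most \<open>\<alpha>(t) L\<close>. Hence \<open>e(t+1) \<le> \<sigma> (e(t) + \<alpha>(t) L \<surd>n)\<close> and \<open>e(0) = 0\<close>, so
  \<open>e(t) \<le> L \<surd>n \<Sum>\<^sub>k\<^sub><\<^sub>t \<sigma>\<^bsup>t-k\<^esup> \<alpha>(k)\<close>. Splitting this sum at \<open>t/2\<close>, the recent half is at most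
  \<open>\<alpha>(t/2)/(1-\<sigma>) \<le> C' \<alpha>(t)/(1-\<sigma>)\<close>, and the early half is at most \<open>(t/2) \<sigma>\<^bsup>t/2\<^esup> \<alpha>(0)\<close>, which the
  hypothesis on \<open>t\<close> (with \<open>c = 2\<close>) bounds by the same quantity.

  The contraction by \<open>\<sigma>\<close> is proved without a spectral theorem: the eigenvalues of \<open>W\<^sup>T W\<close> other
  than the eigenvalue \<open>1\<close> of \<open>\<one>\<close> lie in \<open>[0, \<sigma>\<^sup>2]\<close>, which bounds the traces of its powers, and
  these control \<open>|W v|\<close> for mean-zero \<open>v\<close> through a log-convexity argument.\<close>

section \<open>Sums of squares and the Euclidean norm of vectors\<close>

lemma sum_mult_square_le:
  fixes f g :: "'a \<Rightarrow> real"
  shows "(\<Sum>i\<in>A. f i * g i)\<^sup>2 \<le> (\<Sum>i\<in>A. (f i)\<^sup>2) * (\<Sum>i\<in>A. (g i)\<^sup>2)"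
proof -
  have "\<bar>\<Sum>i\<in>A. f i * g i\<bar> \<le> L2_set f A * L2_set g A"
    using sum_abs[where f = "\<lambda>i. f i * g i" and A = A] L2_set_mult_ineq[where f = f and g = g and A = A] by (simp add: abs_mult)
  then have "(\<Sum>i\<in>A. f i * g i)\<^sup>2 \<le> (L2_set f A * L2_set g A)\<^sup>2"
    by (metis abs_ge_zero order_trans power2_abs power_mono)
  then show ?thesis
    by (simp add: L2_set_def power_mult_distrib sum_nonneg)
qed

lemma scalar_prod_eq_sum:
  "v \<in> carrier_vec n \<Longrightarrow> w \<in> carrier_vec n \<Longrightarrow> v \<bullet> w = (\<Sum>i<n. v $ i * w $ i)"
  by (simp add: scalar_prod_def atLeast0LessThan)

lemma scalar_prod_self_eq_sum: "(v :: real vec) \<in> carrier_vec n \<Longrightarrow> v \<bullet> v = (\<Sum>i<n. (v $ i)\<^sup>2)"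
  by (simp add: scalar_prod_eq_sum power2_eq_square)

lemma scalar_prod_self_nonneg: "(v :: real vec) \<in> carrier_vec n \<Longrightarrow> 0 \<le> v \<bullet> v"
  by (simp add: scalar_prod_self_eq_sum sum_nonneg)

lemma scalar_prod_self_pos:
  assumes u: "(u :: real vec) \<in> carrier_vec n" and "u \<noteq> 0\<^sub>v n"
  shows "0 < u \<bullet> u"
proof -
  obtain i where i: "i < n" "u $ i \<noteq> 0"
    using assms by (metis carrier_vecD eq_vecI index_zero_vec)
  have "(u $ i)\<^sup>2 \<le> (\<Sum>j<n. (u $ j)\<^sup>2)" by (rule member_le_sum) (use i in auto)
  moreover have "0 < (u $ i)\<^sup>2" using i by simp
  ultimately show ?thesis using scalar_prod_self_eq_sum[OF u] by linarith
qed

lemma scalar_prod_square_le: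
  fixes x y :: "real vec"
  assumes "x \<in> carrier_vec n" "y \<in> carrier_vec n"
  shows "(x \<bullet> y)\<^sup>2 \<le> (x \<bullet> x) * (y \<bullet> y)"
  using sum_mult_square_le[of "\<lambda>i. x $ i" "\<lambda>i. y $ i" "{..<n}"] assms
  by (simp add: scalar_prod_eq_sum power2_eq_square)

lemma vnorm_eq_L2_set: "v \<in> carrier_vec d \<Longrightarrow> vnorm v = L2_set (\<lambda>i. v $ i) {..<d}"
  unfolding vnorm_def L2_set_def by (simp add: scalar_prod_self_eq_sum)

lemma vnorm_nonneg: "0 \<le> vnorm v"
  unfolding vnorm_def scalar_prod_def by (simp add: sum_nonneg)

lemma vnorm_diff_eq:
  "a \<in> carrier_vec d \<Longrightarrow> b \<in> carrier_vec d \<Longrightarrow> vnorm (a - b) = sqrt (\<Sum>i<d. (a $ i - b $ i)\<^sup>2)"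
  by (simp add: vnorm_eq_L2_set[of _ d] L2_set_def)

lemma vnorm_add_le:
  "u \<in> carrier_vec d \<Longrightarrow> v \<in> carrier_vec d \<Longrightarrow> vnorm (u + v) \<le> vnorm u + vnorm v"
proof -
  assume u: "u \<in> carrier_vec d" and v: "v \<in> carrier_vec d"
  have "L2_set (\<lambda>i. (u + v) $ i) {..<d} = L2_set (\<lambda>i. u $ i + v $ i) {..<d}"
    using u v by (intro L2_set_cong) auto
  then show ?thesis
    using L2_set_triangle_ineq[of "\<lambda>i. u $ i" "\<lambda>i. v $ i" "{..<d}"] u v
    by (simp add: vnorm_eq_L2_set[of _ d])
qed

lemma vnorm_smult:
  assumes "v \<in> carrier_vec d"
  shows "vnorm (c \<cdot>\<^sub>v v) = \<bar>c\<bar> * vnorm v"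
proof -
  have "(c \<cdot>\<^sub>v v) \<bullet> (c \<cdot>\<^sub>v v) = (c * c) * (v \<bullet> v)"
    using assms by (simp add: scalar_prod_smult_distrib[of _ d])
  then show ?thesis
    unfolding vnorm_def by (simp add: real_sqrt_mult)
qed

section \<open>Projection onto a closed convex set\<close>

definition sq_dist :: "nat \<Rightarrow> real vec \<Rightarrow> real vec \<Rightarrow> real" where
  "sq_dist d x q = (\<Sum>i<d. (x $ i - q $ i)\<^sup>2)"

lemma sq_dist_nonneg: "0 \<le> sq_dist d x q"
  unfolding sq_dist_def by (simp add: sum_nonneg)

lemma vnorm_diff_eq_sq_dist:
  "a \<in> carrier_vec d \<Longrightarrow> b \<in> carrier_vec d \<Longrightarrow> vnorm (a - b) = sqrt (sq_dist d a b)"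
  unfolding sq_dist_def by (rule vnorm_diff_eq)

lemma convex_vsetD:
  "convex_vset d \<Omega> \<Longrightarrow> u \<in> \<Omega> \<Longrightarrow> v \<in> \<Omega> \<Longrightarrow> 0 \<le> \<theta> \<Longrightarrow> \<theta> \<le> 1 \<Longrightarrow>
   \<theta> \<cdot>\<^sub>v u + (1 - \<theta>) \<cdot>\<^sub>v v \<in> \<Omega>"
  unfolding convex_vset_def by blast

lemma convex_vset_subset: "convex_vset d \<Omega> \<Longrightarrow> \<Omega> \<subseteq> carrier_vec d"
  unfolding convex_vset_def by blast

text \<open>Parallelogram law at the midpoint of \<open>s\<close> and \<open>s'\<close>, which lies in \<open>\<Omega>\<close>.\<close>

lemma sq_dist_parallelogram_le:
  assumes cv: "convex_vset d \<Omega>" and s: "s \<in> \<Omega>" and s': "s' \<in> \<Omega>"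
    and lower: "\<And>q. q \<in> \<Omega> \<Longrightarrow> \<delta> \<le> sq_dist d x q"
  shows "(\<Sum>i<d. (s $ i - s' $ i)\<^sup>2) \<le> 2 * sq_dist d x s + 2 * sq_dist d x s' - 4 * \<delta>"
proof -
  define m where "m = (1/2::real) \<cdot>\<^sub>v s + (1 - 1/2) \<cdot>\<^sub>v s'"
  have "m \<in> \<Omega>" unfolding m_def by (rule convex_vsetD[OF cv s s']) auto
  have "s \<in> carrier_vec d" "s' \<in> carrier_vec d" using s s' convex_vset_subset[OF cv] by auto
  then have mi: "m $ i = (s $ i + s' $ i) / 2" if "i < d" for i
    unfolding m_def using that by simp
  have "(\<Sum>i<d. (s $ i - s' $ i)\<^sup>2)
      = (\<Sum>i<d. 2 * (x $ i - s $ i)\<^sup>2 + 2 * (x $ i - s' $ i)\<^sup>2 - 4 * (x $ i - m $ i)\<^sup>2)"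
    by (rule sum.cong) (auto simp: mi power2_eq_square algebra_simps)
  also have "\<dots> = 2 * sq_dist d x s + 2 * sq_dist d x s' - 4 * sq_dist d x m"
    unfolding sq_dist_def by (simp add: sum_distrib_left sum.distrib sum_subtractf)
  finally show ?thesis using lower[OF \<open>m \<in> \<Omega>\<close>] by simp
qed

lemma closed_vset_componentwise_limit:
  assumes "closed_vset d \<Omega>" and "\<And>k. s k \<in> \<Omega>" and "p \<in> carrier_vec d"
    and lim: "\<And>i. i < d \<Longrightarrow> (\<lambda>k. s k $ i) \<longlonglongrightarrow> p $ i"
  shows "p \<in> \<Omega>"
proof -
  have sc: "s k \<in> carrier_vec d" for k
    using assms(1,2) unfolding closed_vset_def by blast
  have "(\<lambda>k. sqrt (\<Sum>i<d. (s k $ i - p $ i)\<^sup>2)) \<longlonglongrightarrow> sqrt (\<Sum>i<d. (p $ i - p $ i)\<^sup>2)"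
    by (intro tendsto_intros tendsto_sum) (use lim in auto)
  then have "(\<lambda>k. vnorm (s k - p)) \<longlonglongrightarrow> 0"
    using vnorm_diff_eq[OF sc \<open>p \<in> carrier_vec d\<close>] by simp
  then show ?thesis using assms(1-3) unfolding closed_vset_def by blast
qed

lemma minimizing_sequence_Cauchy:
  assumes cv: "convex_vset d \<Omega>" and s: "\<And>k. s k \<in> \<Omega>"
    and lower: "\<And>q. q \<in> \<Omega> \<Longrightarrow> \<delta> \<le> sq_dist d x q"
    and near: "\<And>k. sq_dist d x (s k) < \<delta> + 1 / real (Suc k)" and "i < d"
  shows "Cauchy (\<lambda>k. s k $ i)"
proof (rule metric_CauchyI)
  fix e :: real assume e: "e > 0"
  obtain N where "4 / e\<^sup>2 < real N" using reals_Archimedean2 by blast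
  then have N: "4 / e\<^sup>2 < real (Suc N)" by simp
  have "dist (s k $ i) (s l $ i) < e" if "k \<ge> N" "l \<ge> N" for k l
  proof -
    have "(s k $ i - s l $ i)\<^sup>2 \<le> (\<Sum>j<d. (s k $ j - s l $ j)\<^sup>2)"
      by (rule member_le_sum) (use \<open>i < d\<close> in auto)
    also have "\<dots> \<le> 2 * sq_dist d x (s k) + 2 * sq_dist d x (s l) - 4 * \<delta>"
      by (rule sq_dist_parallelogram_le[OF cv s s lower])
    also have "\<dots> < 2 / real (Suc k) + 2 / real (Suc l)"
      using near[of k] near[of l] by simp
    also have "\<dots> \<le> 2 / real (Suc N) + 2 / real (Suc N)"
      using that by (intro add_mono divide_left_mono) auto
    also have "\<dots> < e\<^sup>2"
      using N e by (simp add: divide_less_eq mult.commute)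
    finally have "\<bar>s k $ i - s l $ i\<bar>\<^sup>2 < e\<^sup>2" by simp
    then show ?thesis
      using e by (simp add: dist_real_def power2_less_imp_less)
  qed
  then show "\<exists>M. \<forall>m\<ge>M. \<forall>n\<ge>M. dist (s m $ i) (s n $ i) < e" by blast
qed

lemma nearest_point_exists:
  assumes ne: "\<Omega> \<noteq> {}" and cv: "convex_vset d \<Omega>" and cl: "closed_vset d \<Omega>"
  shows "\<exists>p\<in>\<Omega>. \<forall>q\<in>\<Omega>. sq_dist d x p \<le> sq_dist d x q"
proof -
  define \<delta> where "\<delta> = Inf (sq_dist d x ` \<Omega>)"
  have bdd: "bdd_below (sq_dist d x ` \<Omega>)"
    by (rule bdd_belowI[of _ 0]) (auto simp: sq_dist_nonneg)
  have lower: "\<delta> \<le> sq_dist d x q" if "q \<in> \<Omega>" for q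
    unfolding \<delta>_def using that bdd by (auto intro: cInf_lower)
  have "\<exists>q\<in>\<Omega>. sq_dist d x q < \<delta> + 1 / real (Suc k)" for k
    using cInf_lessD[of "sq_dist d x ` \<Omega>" "\<delta> + 1 / real (Suc k)"] ne unfolding \<delta>_def by auto
  then obtain s where s\<Omega>: "\<And>k. s k \<in> \<Omega>" and sD: "\<And>k. sq_dist d x (s k) < \<delta> + 1 / real (Suc k)"
    by metis
  have cauchy: "Cauchy (\<lambda>k. s k $ i)" if "i < d" for i
    by (rule minimizing_sequence_Cauchy[OF cv s\<Omega> lower sD that])
  define p where "p = vec d (\<lambda>i. lim (\<lambda>k. s k $ i))"
  have lim: "(\<lambda>k. s k $ i) \<longlonglongrightarrow> p $ i" if "i < d" for i
    unfolding p_def using that cauchy[OF that] by (simp add: Cauchy_convergent_iff convergent_LIMSEQ_iff)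
  have "p \<in> \<Omega>"
    by (rule closed_vset_componentwise_limit[OF cl s\<Omega> _ lim]) (simp add: p_def)
  have "(\<lambda>k. sq_dist d x (s k)) \<longlonglongrightarrow> sq_dist d x p"
    unfolding sq_dist_def by (intro tendsto_intros tendsto_sum) (use lim in auto)
  moreover have "(\<lambda>k. \<delta> + 1 / real (Suc k)) \<longlonglongrightarrow> \<delta> + 0"
    by (intro tendsto_intros LIMSEQ_inverse_real_of_nat[unfolded inverse_eq_divide])
  ultimately have "sq_dist d x p \<le> \<delta> + 0"
    by (rule LIMSEQ_le) (use sD less_imp_le in blast)
  then show ?thesis using \<open>p \<in> \<Omega>\<close> lower by force
qed

lemma proj_nearest:
  assumes ne: "\<Omega> \<noteq> {}" and cv: "convex_vset d \<Omega>" and cl: "closed_vset d \<Omega>"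
    and x: "x \<in> carrier_vec d"
  shows "proj \<Omega> x \<in> \<Omega>" and "\<And>q. q \<in> \<Omega> \<Longrightarrow> sq_dist d x (proj \<Omega> x) \<le> sq_dist d x q"
proof -
  have sub: "\<Omega> \<subseteq> carrier_vec d" by (rule convex_vset_subset[OF cv])
  have vnorm_le_iff: "vnorm (x - p) \<le> vnorm (x - q) \<longleftrightarrow> sq_dist d x p \<le> sq_dist d x q"
    if "p \<in> \<Omega>" "q \<in> \<Omega>" for p q
  proof -
    have "p \<in> carrier_vec d" "q \<in> carrier_vec d" using that sub by auto
    then show ?thesis by (simp add: vnorm_diff_eq_sq_dist[OF x])
  qed
  obtain p where "p \<in> \<Omega>" "\<forall>q\<in>\<Omega>. sq_dist d x p \<le> sq_dist d x q"
    using nearest_point_exists[OF ne cv cl] by blast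
  then have "\<exists>p. p \<in> \<Omega> \<and> (\<forall>q\<in>\<Omega>. vnorm (x - p) \<le> vnorm (x - q))"
    using vnorm_le_iff by blast
  then have pp: "proj \<Omega> x \<in> \<Omega> \<and> (\<forall>q\<in>\<Omega>. vnorm (x - proj \<Omega> x) \<le> vnorm (x - q))"
    unfolding proj_def by (rule someI_ex)
  then show "proj \<Omega> x \<in> \<Omega>" by blast
  show "sq_dist d x (proj \<Omega> x) \<le> sq_dist d x q" if "q \<in> \<Omega>" for q
    using pp that vnorm_le_iff by blast
qed

text \<open>The first-order condition: the direction from the nearest point to \<open>x\<close> makes an obtuse
  angle with every direction into \<open>\<Omega>\<close>; otherwise a short step towards \<open>q\<close> gets closer to \<open>x\<close>.\<close>

lemma nearest_point_obtuse:
  assumes cv: "convex_vset d \<Omega>"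
    and p: "p \<in> \<Omega>" and pmin: "\<And>q. q \<in> \<Omega> \<Longrightarrow> sq_dist d x p \<le> sq_dist d x q" and q: "q \<in> \<Omega>"
  shows "(\<Sum>i<d. (x $ i - p $ i) * (q $ i - p $ i)) \<le> 0"
proof (rule ccontr)
  assume "\<not> (\<Sum>i<d. (x $ i - p $ i) * (q $ i - p $ i)) \<le> 0"
  moreover define c where "c = (\<Sum>i<d. (x $ i - p $ i) * (q $ i - p $ i))"
  ultimately have c0: "c > 0" by simp
  define e where "e = (\<Sum>i<d. (q $ i - p $ i)\<^sup>2)"
  have e0: "e \<ge> 0" unfolding e_def by (simp add: sum_nonneg)
  define \<theta> where "\<theta> = min 1 (c / (e + 1))"
  have th0: "\<theta> > 0" and th1: "\<theta> \<le> 1" unfolding \<theta>_def using c0 e0 by auto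
  define z where "z = \<theta> \<cdot>\<^sub>v q + (1 - \<theta>) \<cdot>\<^sub>v p"
  have "z \<in> \<Omega>" unfolding z_def by (rule convex_vsetD[OF cv q p]) (use th0 th1 in auto)
  have "p \<in> carrier_vec d" "q \<in> carrier_vec d" using p q convex_vset_subset[OF cv] by auto
  then have zi: "z $ i = p $ i + \<theta> * (q $ i - p $ i)" if "i < d" for i
    unfolding z_def using that by (simp add: algebra_simps)
  have "sq_dist d x z = (\<Sum>i<d. (x $ i - p $ i)\<^sup>2 - 2 * \<theta> * ((x $ i - p $ i) * (q $ i - p $ i))
        + \<theta>\<^sup>2 * (q $ i - p $ i)\<^sup>2)"
    unfolding sq_dist_def by (rule sum.cong) (auto simp: zi power2_eq_square algebra_simps)
  also have "\<dots> = sq_dist d x p - 2 * \<theta> * c + \<theta>\<^sup>2 * e"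
    unfolding sq_dist_def c_def e_def by (simp add: sum.distrib sum_subtractf sum_distrib_left)
  finally have "sq_dist d x p \<le> sq_dist d x p - 2 * \<theta> * c + \<theta>\<^sup>2 * e"
    using pmin[OF \<open>z \<in> \<Omega>\<close>] by simp
  then have "2 * c \<le> \<theta> * e" using th0 by (simp add: power2_eq_square)
  moreover have "\<theta> * e \<le> c / (e + 1) * e" unfolding \<theta>_def using e0 by (intro mult_right_mono) auto
  moreover have "c / (e + 1) * e \<le> c" using c0 e0 by (simp add: field_simps)
  ultimately show False using c0 by linarith
qed

lemma proj_nonexpansive:
  assumes ne: "\<Omega> \<noteq> {}" and cv: "convex_vset d \<Omega>" and cl: "closed_vset d \<Omega>"
    and a: "a \<in> carrier_vec d" and b: "b \<in> carrier_vec d"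
  shows "vnorm (proj \<Omega> a - proj \<Omega> b) \<le> vnorm (a - b)"
proof -
  define p where "p = proj \<Omega> a"
  define q where "q = proj \<Omega> b"
  note pa = proj_nearest[OF ne cv cl a, folded p_def] and qb = proj_nearest[OF ne cv cl b, folded q_def]
  have pc: "p \<in> carrier_vec d" and qc: "q \<in> carrier_vec d"
    using pa(1) qb(1) convex_vset_subset[OF cv] by auto
  define P where "P = (\<Sum>i<d. (p $ i - q $ i)\<^sup>2)"
  define A where "A = (\<Sum>i<d. (a $ i - b $ i)\<^sup>2)"
  have "(\<Sum>i<d. (a $ i - p $ i) * (q $ i - p $ i)) + (\<Sum>i<d. (b $ i - q $ i) * (p $ i - q $ i))
     = P - (\<Sum>i<d. (a $ i - b $ i) * (p $ i - q $ i))"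
    unfolding P_def sum.distrib[symmetric] sum_subtractf[symmetric]
    by (rule sum.cong) (auto simp: power2_eq_square algebra_simps)
  then have "P \<le> (\<Sum>i<d. (a $ i - b $ i) * (p $ i - q $ i))"
    using nearest_point_obtuse[OF cv pa qb(1)] nearest_point_obtuse[OF cv qb pa(1)] by linarith
  also have "\<dots> \<le> sqrt A * sqrt P"
  proof -
    have "(\<Sum>i<d. (a $ i - b $ i) * (p $ i - q $ i))\<^sup>2 \<le> A * P"
      unfolding A_def P_def by (rule sum_mult_square_le)
    then have "\<bar>\<Sum>i<d. (a $ i - b $ i) * (p $ i - q $ i)\<bar> \<le> sqrt (A * P)"
      by (simp add: real_le_rsqrt)
    then show ?thesis by (simp add: real_sqrt_mult)
  qed
  finally have PA: "P \<le> sqrt A * sqrt P" .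
  have "sqrt P \<le> sqrt A"
  proof (cases "P = 0")
    case True then show ?thesis by (simp add: A_def sum_nonneg)
  next
    case False
    then have "sqrt P > 0" by (simp add: P_def sum_nonneg order.not_eq_order_implies_strict)
    moreover have "sqrt P * sqrt P \<le> sqrt A * sqrt P" using PA by (simp add: P_def sum_nonneg)
    ultimately show ?thesis using mult_right_le_imp_le by blast
  qed
  then show ?thesis
    unfolding p_def[symmetric] q_def[symmetric] P_def A_def vnorm_diff_eq[OF pc qc] vnorm_diff_eq[OF a b] .
qed

section \<open>Powers, traces and real symmetric matrices\<close>

lemma pow_mat_add:
  assumes M: "M \<in> carrier_mat n n"
  shows "M ^\<^sub>m (a + b) = M ^\<^sub>m a * M ^\<^sub>m b"
proof (induct b)
  case 0
  then show ?case using M by simp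
next
  case (Suc b)
  have "M ^\<^sub>m (a + Suc b) = (M ^\<^sub>m a * M ^\<^sub>m b) * M" using Suc by simp
  also have "\<dots> = M ^\<^sub>m a * (M ^\<^sub>m b * M)"
    by (rule assoc_mult_mat[of _ n n _ n _ n]) (use M in auto)
  finally show ?case by simp
qed

lemma pow_mat_mult_commute:
  assumes M: "M \<in> carrier_mat n n"
  shows "M ^\<^sub>m k * M = M * M ^\<^sub>m k"
  using pow_mat_add[OF M, of k 1] pow_mat_add[OF M, of 1 k] M by simp

lemma pow_mat_transpose:
  fixes M :: "'a::comm_ring_1 mat"
  assumes M: "M \<in> carrier_mat n n" and sym: "transpose_mat M = M"
  shows "transpose_mat (M ^\<^sub>m k) = M ^\<^sub>m k"
proof (induct k)
  case 0
  then show ?case using M by simp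
next
  case (Suc k)
  have "transpose_mat (M ^\<^sub>m Suc k) = transpose_mat M * transpose_mat (M ^\<^sub>m k)"
    using transpose_mult[of "M ^\<^sub>m k" n n M n] M by simp
  then show ?case using Suc sym pow_mat_mult_commute[OF M] by simp
qed

lemma pow_mat_mult_vec_fixed:
  assumes M: "M \<in> carrier_mat n n" and v: "v \<in> carrier_vec n" and fixed: "M *\<^sub>v v = v"
  shows "M ^\<^sub>m k *\<^sub>v v = v"
proof (induct k)
  case 0
  then show ?case using M v by simp
next
  case (Suc k)
  have "M ^\<^sub>m Suc k *\<^sub>v v = M ^\<^sub>m k *\<^sub>v (M *\<^sub>v v)"
    using M v by (simp add: assoc_mult_mat_vec[of _ n n _ n])
  then show ?case using fixed Suc by simp
qed

definition mat_trace :: "'a::comm_ring_1 mat \<Rightarrow> 'a" where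
  "mat_trace A = (\<Sum>i<dim_row A. A $$ (i,i))"

lemma mat_trace_mult_eq_sum:
  assumes "A \<in> carrier_mat n m" "B \<in> carrier_mat m n"
  shows "mat_trace (A * B) = (\<Sum>i<n. \<Sum>j<m. A $$ (i,j) * B $$ (j,i))"
  unfolding mat_trace_def using assms
  by (auto simp: scalar_prod_def atLeast0LessThan intro!: sum.cong)

lemma mat_trace_mult_commute:
  assumes A: "A \<in> carrier_mat n m" and B: "B \<in> carrier_mat m n"
  shows "mat_trace (A * B) = mat_trace (B * A)"
  unfolding mat_trace_mult_eq_sum[OF A B] mat_trace_mult_eq_sum[OF B A]
  by (subst sum.swap) (simp add: mult.commute)

lemma upper_triangular_mult_index:
  assumes A: "A \<in> carrier_mat n n" and B: "B \<in> carrier_mat n n"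
    and uA: "upper_triangular A" and uB: "upper_triangular B"
    and i: "i < n" and ji: "j \<le> i"
  shows "(A * B) $$ (i,j) = (if i = j then A $$ (i,i) * B $$ (i,i) else 0)"
proof -
  have j: "j < n" using i ji by simp
  have vanish: "A $$ (i,k) * B $$ (k,j) = 0" if "k < n" "k \<noteq> i" for k
  proof (cases "k < i")
    case True then show ?thesis using uA A i by (simp add: upper_triangularD)
  next
    case False then show ?thesis using uB B that ji by (simp add: upper_triangularD)
  qed
  have "(A * B) $$ (i,j) = (\<Sum>k\<in>{..<n}. A $$ (i,k) * B $$ (k,j))"
    using A B i j by (auto simp: scalar_prod_def atLeast0LessThan intro!: sum.cong)
  also have "\<dots> = A $$ (i,i) * B $$ (i,j)"
    using i vanish by (subst sum.remove[of _ i]) (auto intro!: sum.neutral)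
  also have "B $$ (i,j) = (if i = j then B $$ (i,i) else 0)"
    using uB B i ji by (auto intro: upper_triangularD)
  finally show ?thesis by simp
qed

lemma upper_triangular_pow:
  assumes B: "B \<in> carrier_mat n n" and uB: "upper_triangular B"
  shows "upper_triangular (B ^\<^sub>m k) \<and> (\<forall>i<n. (B ^\<^sub>m k) $$ (i,i) = (B $$ (i,i)) ^ k)"
proof (induct k)
  case 0
  then show ?case using B by auto
next
  case (Suc k)
  have index: "(B ^\<^sub>m k * B) $$ (i,j) = (if i = j then (B ^\<^sub>m k) $$ (i,i) * B $$ (i,i) else 0)"
    if "i < n" "j \<le> i" for i j
    using upper_triangular_mult_index[OF pow_carrier_mat[OF B] B _ uB that] Suc by blast
  have "upper_triangular (B ^\<^sub>m Suc k)"
    using index B by (intro upper_triangularI) auto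
  moreover have "(B ^\<^sub>m Suc k) $$ (i,i) = (B $$ (i,i)) ^ Suc k" if "i < n" for i
    using index[OF that order.refl] Suc that by (simp del: power_Suc add: power_Suc2)
  ultimately show ?case by blast
qed

lemma mat_trace_pow_eq_sum_roots:
  fixes A :: "complex mat"
  assumes A: "A \<in> carrier_mat n n" and cp: "char_poly A = (\<Prod>a\<leftarrow>as. [:- a, 1:])"
  shows "mat_trace (A ^\<^sub>m k) = sum_list (map (\<lambda>a. a ^ k) as)"
proof -
  obtain B P Q where "schur_decomposition A as = (B,P,Q)"
    using prod_cases3 by blast
  from schur_decomposition[OF A cp this]
  have sim: "similar_mat_wit A B P Q" and uB: "upper_triangular B" and dB: "diag_mat B = as"
    by auto
  from similar_mat_witD2[OF A sim]
  have B: "B \<in> carrier_mat n n" and P: "P \<in> carrier_mat n n" and Q: "Q \<in> carrier_mat n n"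
    and QP: "Q * P = 1\<^sub>m n" by blast+
  have Bk: "B ^\<^sub>m k \<in> carrier_mat n n" using B by simp
  have "mat_trace (A ^\<^sub>m k) = mat_trace (P * B ^\<^sub>m k * Q)"
    by (simp add: similar_mat_wit_pow_id[OF sim])
  also have "\<dots> = mat_trace ((Q * P) * B ^\<^sub>m k)"
    using mat_trace_mult_commute[of "P * B ^\<^sub>m k" n n Q] P Bk Q by (simp add: assoc_mult_mat[of _ n n _ n _ n])
  also have "\<dots> = (\<Sum>i<n. (B $$ (i,i)) ^ k)"
    unfolding QP left_mult_one_mat[OF Bk] mat_trace_def using upper_triangular_pow[OF B uB, of k] Bk B
    by simp
  also have "\<dots> = sum_list (map (\<lambda>a. a ^ k) as)"
    unfolding dB[symmetric] diag_mat_def using B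
    by (simp add: o_def sum.distinct_set_conv_list[symmetric] atLeast0LessThan)
  finally show ?thesis .
qed

lemma real_symmetric_eigenvalue_real:
  fixes M :: "real mat"
  assumes M: "M \<in> carrier_mat n n" and sym: "\<And>i j. i < n \<Longrightarrow> j < n \<Longrightarrow> M $$ (i,j) = M $$ (j,i)"
    and ev: "eigenvalue (map_mat of_real M) a"
  shows "Im a = 0"
proof -
  let ?Mc = "map_mat (of_real :: real \<Rightarrow> complex) M"
  from ev obtain u where "eigenvector ?Mc u a" unfolding eigenvalue_def by auto
  then have uc: "u \<in> carrier_vec n" and u0: "u \<noteq> 0\<^sub>v n" and eq: "?Mc *\<^sub>v u = a \<cdot>\<^sub>v u"
    unfolding eigenvector_def using M by auto
  have row: "(\<Sum>j<n. of_real (M $$ (i,j)) * u $ j) = a * u $ i" if "i < n" for i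
    using arg_cong[OF eq, of "\<lambda>v. v $ i"] that M uc by (simp add: scalar_prod_def atLeast0LessThan)
  define S where "S = (\<Sum>i<n. \<Sum>j<n. of_real (M $$ (i,j)) * u $ j * cnj (u $ i))"
  define R where "R = (\<Sum>i<n. (cmod (u $ i))\<^sup>2)"
  have "S = (\<Sum>i<n. (\<Sum>j<n. of_real (M $$ (i,j)) * u $ j) * cnj (u $ i))"
    unfolding S_def by (simp add: sum_distrib_right)
  also have "\<dots> = (\<Sum>i<n. a * (u $ i * cnj (u $ i)))"
    by (simp add: row mult.assoc)
  also have "\<dots> = a * of_real R"
  proof -
    have "\<And>z. z * cnj z = complex_of_real ((cmod z)\<^sup>2)" by (simp only: complex_norm_square)
    then show ?thesis unfolding R_def of_real_sum sum_distrib_left by presburger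
  qed
  finally have SR: "S = a * of_real R" .
  text \<open>The Hermitian form \<open>u\<^sup>* M u\<close> of a real symmetric \<open>M\<close> is real.\<close>
  have "cnj S = S"
    unfolding S_def using sym
    by (subst sum.swap) (auto intro!: sum.cong simp: mult.commute mult.left_commute)
  then have "Im S = 0" by (metis Reals_cnj_iff complex_is_Real_iff)
  moreover have "R > 0"
  proof -
    obtain i where i: "i < n" "u $ i \<noteq> 0"
      using u0 uc by (metis carrier_vecD eq_vecI index_zero_vec)
    have "(cmod (u $ i))\<^sup>2 \<le> R" unfolding R_def by (rule member_le_sum) (use i in auto)
    moreover have "(cmod (u $ i))\<^sup>2 > 0" using i by simp
    ultimately show ?thesis by linarith
  qed
  ultimately show ?thesis using SR by simp
qed

lemma real_symmetric_char_poly_splits: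
  fixes M :: "real mat"
  assumes M: "M \<in> carrier_mat n n" and sym: "\<And>i j. i < n \<Longrightarrow> j < n \<Longrightarrow> M $$ (i,j) = M $$ (j,i)"
  obtains rs where "length rs = n" and "char_poly M = (\<Prod>r\<leftarrow>rs. [:- r, 1:])"
    and "\<And>k. mat_trace (M ^\<^sub>m k) = sum_list (map (\<lambda>r. r ^ k) rs)"
proof -
  interpret p: map_poly_inj_idom_hom "of_real :: real \<Rightarrow> complex" ..
  let ?Mc = "map_mat (of_real :: real \<Rightarrow> complex) M"
  have Mc: "?Mc \<in> carrier_mat n n" using M by simp
  obtain as where cas: "char_poly ?Mc = (\<Prod>a\<leftarrow>as. [:- a, 1:])" and las: "length as = n"
    using char_poly_factorized[OF Mc] by blast
  have "of_real (Re a) = a" if "a \<in> set as" for a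
  proof -
    have "poly (char_poly ?Mc) a = 0" unfolding cas using that by (rule linear_poly_root)
    then have "Im a = 0"
      using eigenvalue_root_char_poly[OF Mc] real_symmetric_eigenvalue_real[OF M sym] by blast
    then show ?thesis by (simp add: complex_eq_iff)
  qed
  then have asrs: "as = map of_real (map Re as)"
    by (simp add: map_idI)
  define rs where "rs = map Re as"
  have "map_poly of_real (char_poly M) = char_poly ?Mc"
    by (rule of_real_hom.char_poly_hom[OF M, symmetric])
  also have "\<dots> = map_poly of_real (\<Prod>r\<leftarrow>rs. [:- r, 1:])"
    unfolding cas rs_def by (subst asrs) (simp add: p.hom_prod_list o_def)
  finally have cp: "char_poly M = (\<Prod>r\<leftarrow>rs. [:- r, 1:])" by (rule p.injectivity)
  have trace: "mat_trace (M ^\<^sub>m k) = sum_list (map (\<lambda>r. r ^ k) rs)" for k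
  proof -
    have "of_real (mat_trace (M ^\<^sub>m k)) = mat_trace (?Mc ^\<^sub>m k)"
      unfolding of_real_hom.mat_hom_pow[OF M, symmetric] mat_trace_def using M by (simp add: of_real_sum)
    also have "\<dots> = sum_list (map (\<lambda>a. a ^ k) as)" by (rule mat_trace_pow_eq_sum_roots[OF Mc cas])
    also have "\<dots> = of_real (sum_list (map (\<lambda>r. r ^ k) rs))"
      unfolding rs_def by (subst asrs) (simp add: o_def of_real_hom.hom_sum_list)
    finally show ?thesis by (simp only: of_real_eq_iff)
  qed
  show ?thesis by (rule that[of rs]) (use las cp trace in \<open>simp_all add: rs_def\<close>)
qed

section \<open>Contraction by the second singular value\<close>

definition ones_vec :: "nat \<Rightarrow> real vec" where
  "ones_vec n = vec n (\<lambda>_. 1)"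

lemma ones_vec_carrier [simp]: "ones_vec n \<in> carrier_vec n"
  unfolding ones_vec_def by simp

locale doubly_stochastic =
  fixes W :: "real mat" and n :: nat
  assumes W_carrier: "W \<in> carrier_mat n n"
    and row_sums: "\<And>i. i < n \<Longrightarrow> (\<Sum>j<n. W $$ (i,j)) = 1"
    and col_sums: "\<And>j. j < n \<Longrightarrow> (\<Sum>i<n. W $$ (i,j)) = 1"
begin

definition gram :: "real mat" where
  "gram = transpose_mat W * W"

lemma gram_carrier: "gram \<in> carrier_mat n n"
  unfolding gram_def using W_carrier by auto

lemma gram_pow_carrier: "gram ^\<^sub>m k \<in> carrier_mat n n"
  using gram_carrier by simp

lemma gram_transpose: "transpose_mat gram = gram"
  unfolding gram_def using W_carrier by (simp add: transpose_mult[of _ n n W n])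

lemma gram_symmetric: "i < n \<Longrightarrow> j < n \<Longrightarrow> gram $$ (i,j) = gram $$ (j,i)"
  using gram_transpose gram_carrier by (metis carrier_matD index_transpose_mat(1))

lemma gram_pow_symmetric: "i < n \<Longrightarrow> j < n \<Longrightarrow> (gram ^\<^sub>m k) $$ (i,j) = (gram ^\<^sub>m k) $$ (j,i)"
  using pow_mat_transpose[OF gram_carrier gram_transpose, of k] gram_pow_carrier
  by (metis carrier_matD index_transpose_mat(1))

lemma W_mult_ones: "W *\<^sub>v ones_vec n = ones_vec n"
  by (rule eq_vecI) (use W_carrier row_sums in \<open>auto simp: ones_vec_def scalar_prod_def atLeast0LessThan\<close>)

lemma transpose_W_mult_ones: "transpose_mat W *\<^sub>v ones_vec n = ones_vec n"
  by (rule eq_vecI) (use W_carrier col_sums in \<open>auto simp: ones_vec_def scalar_prod_def atLeast0LessThan\<close>)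

lemma gram_mult_ones: "gram *\<^sub>v ones_vec n = ones_vec n"
  unfolding gram_def using W_carrier
  by (simp add: assoc_mult_mat_vec[of _ n n _ n] W_mult_ones transpose_W_mult_ones)

lemma gram_pow_row_sums:
  assumes "i < n"
  shows "(\<Sum>j<n. (gram ^\<^sub>m k) $$ (i,j)) = 1"
proof -
  have "(gram ^\<^sub>m k *\<^sub>v ones_vec n) $ i = 1"
    using pow_mat_mult_vec_fixed[OF gram_carrier ones_vec_carrier gram_mult_ones] assms
    by (simp add: ones_vec_def)
  then show ?thesis
    using assms gram_carrier by (simp add: ones_vec_def scalar_prod_def atLeast0LessThan)
qed

lemma gram_quadratic_form: "u \<in> carrier_vec n \<Longrightarrow> u \<bullet> (gram *\<^sub>v u) = (W *\<^sub>v u) \<bullet> (W *\<^sub>v u)"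
  unfolding gram_def using W_carrier
  by (simp add: assoc_mult_mat_vec[of _ n n _ n] comm_scalar_prod[of u n]
      transpose_vec_mult_scalar[of W n n u])

lemma gram_pow_mult_vec_square:
  assumes v: "v \<in> carrier_vec n"
  shows "(gram ^\<^sub>m k *\<^sub>v v) \<bullet> (gram ^\<^sub>m k *\<^sub>v v) = v \<bullet> (gram ^\<^sub>m (k + k) *\<^sub>v v)"
proof -
  let ?P = "gram ^\<^sub>m k"
  have P: "?P \<in> carrier_mat n n" by (rule gram_pow_carrier)
  have "(?P *\<^sub>v v) \<bullet> (?P *\<^sub>v v) = (transpose_mat ?P *\<^sub>v (?P *\<^sub>v v)) \<bullet> v"
    by (rule transpose_vec_mult_scalar[OF P v, symmetric]) (use P v in auto)
  also have "transpose_mat ?P *\<^sub>v (?P *\<^sub>v v) = gram ^\<^sub>m (k + k) *\<^sub>v v"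
    unfolding pow_mat_transpose[OF gram_carrier gram_transpose] pow_mat_add[OF gram_carrier]
    using P v by (simp add: assoc_mult_mat_vec[of _ n n _ n])
  finally show ?thesis
    using comm_scalar_prod[OF mult_mat_vec_carrier[OF gram_pow_carrier v] v] by simp
qed

lemma gram_char_poly_root_nonneg:
  assumes "poly (char_poly gram) r = 0"
  shows "0 \<le> r"
proof -
  have "eigenvalue gram r" using eigenvalue_root_char_poly[OF gram_carrier] assms by simp
  then obtain u where "eigenvector gram u r" unfolding eigenvalue_def by auto
  then have u: "u \<in> carrier_vec n" and u0: "u \<noteq> 0\<^sub>v n" and eq: "gram *\<^sub>v u = r \<cdot>\<^sub>v u"
    unfolding eigenvector_def using gram_carrier by auto
  have "r * (u \<bullet> u) = (W *\<^sub>v u) \<bullet> (W *\<^sub>v u)"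
    using gram_quadratic_form[OF u] eq u by simp
  also have "\<dots> \<ge> 0" using W_carrier u by (intro scalar_prod_self_nonneg[of _ n]) auto
  finally show ?thesis using scalar_prod_self_pos[OF u u0] by (simp add: zero_le_mult_iff)
qed

lemma gram_char_poly_root_one:
  assumes "n > 0"
  shows "poly (char_poly gram) 1 = 0"
proof -
  have "ones_vec n \<noteq> 0\<^sub>v n"
    using assms by (metis index_vec index_zero_vec(1) ones_vec_def zero_neq_one)
  then have "eigenvector gram (ones_vec n) 1"
    unfolding eigenvector_def using gram_carrier gram_mult_ones by simp
  then show ?thesis
    using eigenvalue_root_char_poly[OF gram_carrier] unfolding eigenvalue_def by blast
qed

lemma gram_char_poly_splits:
  obtains rs where "length rs = n" and "char_poly gram = (\<Prod>r\<leftarrow>rs. [:- r, 1:])"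
    and "\<And>k. mat_trace (gram ^\<^sub>m k) = sum_list (map (\<lambda>r. r ^ k) rs)"
  using real_symmetric_char_poly_splits[OF gram_carrier gram_symmetric] by blast

end

lemma proots_prod_linear_factors: "proots (\<Prod>r\<leftarrow>rs. [:- r, 1:]) = mset (rs :: real list)"
proof (induct rs)
  case Nil then show ?case by simp
next
  case (Cons r rs)
  have "(\<Prod>r\<leftarrow>rs. [:- r, 1:]) \<noteq> (0 :: real poly)"
    by (auto simp: prod_list_zero_iff)
  then show ?case using Cons by (simp add: proots_mult proots_linear_factor del: mult_pCons_left)
qed

lemma size_filter_gt_second_largest:
  fixes xs :: "'a::linorder list"
  defines "l \<equiv> rev (sort xs)"
  shows "size (filter_mset (\<lambda>z. l ! 1 < z) (mset xs)) \<le> 1"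
proof -
  let ?P = "\<lambda>z. l ! 1 < z"
  have "sorted (rev l)" unfolding l_def by simp
  have "filter ?P (drop 1 l) = []"
  proof (rule filter_False, rule ballI)
    fix z assume "z \<in> set (drop 1 l)"
    then obtain j where j: "j < length (drop 1 l)" and z: "z = drop 1 l ! j"
      by (auto simp: in_set_conv_nth)
    have "z = l ! (1 + j)" using z j by simp
    also have "\<dots> \<le> l ! 1"
      using sorted_rev_nth_mono[OF \<open>sorted (rev l)\<close>, of 1 "1 + j"] j by simp
    finally show "\<not> ?P z" by simp
  qed
  then have "filter ?P l = filter ?P (take 1 l)"
    by (metis append.right_neutral append_take_drop_id filter_append)
  moreover have "mset l = mset xs" unfolding l_def by simp
  ultimately have "size (filter_mset ?P (mset xs)) = length (filter ?P (take 1 l))"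
    by (metis mset_filter size_mset)
  also have "\<dots> \<le> length (take 1 l)" by (rule length_filter_le)
  also have "\<dots> \<le> 1" by simp
  finally show ?thesis .
qed

context doubly_stochastic
begin

lemma second_singular_value_eq:
  assumes "char_poly gram = (\<Prod>r\<leftarrow>rs. [:- r, 1:])"
  shows "second_singular_value W =
    (let l = rev (sort (map sqrt rs)) in if 2 \<le> length l then l ! 1 else 0)"
proof -
  have "singular_values W = mset (map sqrt rs)"
    unfolding singular_values_def gram_def[symmetric] assms proots_prod_linear_factors by simp
  then show ?thesis
    unfolding second_singular_value_def by (simp only: sorted_list_of_multiset_mset)
qed

lemma second_singular_value_nonneg: "0 \<le> second_singular_value W"
proof -
  obtain rs where cp: "char_poly gram = (\<Prod>r\<leftarrow>rs. [:- r, 1:])"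
    using gram_char_poly_splits by blast
  have "0 \<le> r" if "r \<in> set rs" for r
    using gram_char_poly_root_nonneg linear_poly_root[OF that] cp by simp
  then have "0 \<le> z" if "z \<in> set (rev (sort (map sqrt rs)))" for z
    using that by auto
  then show ?thesis
    unfolding second_singular_value_eq[OF cp] Let_def
    using nth_mem[of 1 "rev (sort (map sqrt rs))"] by auto
qed

text \<open>The eigenvalue \<open>1\<close> of \<open>W\<^sup>T W\<close> (eigenvector \<open>\<one>\<close>) accounts for the largest singular value,
  so once it is removed every other eigenvalue lies below \<open>\<sigma>\<^sup>2\<close>.\<close>

lemma gram_eigenvalues_le:
  assumes n: "n > 0" and \<sigma>: "second_singular_value W < 1"
    and cp: "char_poly gram = (\<Prod>r\<leftarrow>rs. [:- r, 1:])"
  obtains rs' where "mset rs = add_mset 1 (mset rs')"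
    and "\<And>r. r \<in> set rs' \<Longrightarrow> 0 \<le> r \<and> r \<le> (second_singular_value W)\<^sup>2"
proof -
  define \<sigma> where "\<sigma> = second_singular_value W"
  have nonneg: "0 \<le> r" if "r \<in> set rs" for r
    using gram_char_poly_root_nonneg linear_poly_root[OF that] cp by simp
  have "poly (\<Prod>r\<leftarrow>rs. [:- r, 1:]) 1 = 0" using gram_char_poly_root_one[OF n] cp by simp
  then have "1 \<in> set rs" unfolding poly_prod_list_zero_iff by auto
  define rs' where "rs' = remove1 1 rs"
  have ms: "mset rs = add_mset 1 (mset rs')" unfolding rs'_def using \<open>1 \<in> set rs\<close> by simp
  have "sqrt r \<le> \<sigma>" if r: "r \<in> set rs'" for r
  proof (rule ccontr)
    define l where "l = rev (sort (map sqrt rs))"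
    have sv: "mset (map sqrt rs) = add_mset 1 (mset (map sqrt rs'))"
      using ms by (metis image_mset_add_mset mset_map real_sqrt_one)
    have "length rs = Suc (length rs')"
      using arg_cong[OF ms, of size] by simp
    moreover have "rs' \<noteq> []" using r by auto
    ultimately have "length rs \<ge> 2" by (cases rs') auto
    then have \<sigma>_eq: "\<sigma> = l ! 1"
      unfolding \<sigma>_def second_singular_value_eq[OF cp] l_def Let_def by simp
    assume "\<not> sqrt r \<le> \<sigma>"
    then have "sqrt r \<in># filter_mset (\<lambda>z. l ! 1 < z) (mset (map sqrt rs'))"
      using r \<sigma>_eq by simp
    then have "0 < size (filter_mset (\<lambda>z. l ! 1 < z) (mset (map sqrt rs')))"
      by (metis empty_iff neq0_conv set_mset_empty size_eq_0_iff_empty)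
    moreover have "l ! 1 < 1" using \<sigma> \<sigma>_eq unfolding \<sigma>_def by simp
    ultimately have "2 \<le> size (filter_mset (\<lambda>z. l ! 1 < z) (mset (map sqrt rs)))"
      unfolding sv by simp
    then show False using size_filter_gt_second_largest[of "map sqrt rs"] unfolding l_def by simp
  qed
  moreover have nonneg': "0 \<le> r" if "r \<in> set rs'" for r
    using that nonneg set_remove1_subset[of 1 rs] unfolding rs'_def by blast
  ultimately have "r \<le> \<sigma>\<^sup>2" if "r \<in> set rs'" for r
    using power_mono[of "sqrt r" \<sigma> 2] that by simp
  then show ?thesis
    using that[OF ms] nonneg' unfolding \<sigma>_def by blast
qed

lemma gram_trace_pow_le:
  assumes n: "n > 0" and \<sigma>: "second_singular_value W < 1"
  shows "mat_trace (gram ^\<^sub>m k) - 1 \<le> real (n - 1) * ((second_singular_value W)\<^sup>2) ^ k"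
proof -
  obtain rs where len: "length rs = n" and cp: "char_poly gram = (\<Prod>r\<leftarrow>rs. [:- r, 1:])"
    and tr: "mat_trace (gram ^\<^sub>m k) = sum_list (map (\<lambda>r. r ^ k) rs)"
    using gram_char_poly_splits by metis
  obtain rs' where ms: "mset rs = add_mset 1 (mset rs')"
    and bound: "\<And>r. r \<in> set rs' \<Longrightarrow> 0 \<le> r \<and> r \<le> (second_singular_value W)\<^sup>2"
    using gram_eigenvalues_le[OF n \<sigma> cp] by blast
  have "sum_list (map (\<lambda>r. r ^ k) rs) = sum_mset (image_mset (\<lambda>r. r ^ k) (mset rs))"
    by (simp flip: sum_mset_sum_list)
  also have "\<dots> = 1 + sum_list (map (\<lambda>r. r ^ k) rs')"
    unfolding ms by (simp flip: sum_mset_sum_list)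
  finally have "sum_list (map (\<lambda>r. r ^ k) rs) = 1 + sum_list (map (\<lambda>r. r ^ k) rs')" .
  moreover have "sum_list (map (\<lambda>r. r ^ k) rs') \<le> sum_list (map (\<lambda>r. ((second_singular_value W)\<^sup>2) ^ k) rs')"
    by (rule sum_list_mono) (use bound in \<open>auto intro: power_mono\<close>)
  moreover have "length rs' = n - 1" using arg_cong[OF ms, of size] len by simp
  ultimately show ?thesis using tr by (simp add: sum_list_triv)
qed

end

lemma sum_sq_sub_uniform_eq_trace:
  fixes A :: "real mat"
  assumes A: "A \<in> carrier_mat n n" and n: "0 < n"
    and sym: "\<And>i j. i < n \<Longrightarrow> j < n \<Longrightarrow> A $$ (i,j) = A $$ (j,i)"
    and rows: "\<And>i. i < n \<Longrightarrow> (\<Sum>j<n. A $$ (i,j)) = 1"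
  shows "(\<Sum>i<n. \<Sum>j<n. (A $$ (i,j) - 1 / real n)\<^sup>2) = mat_trace (A * A) - 1"
proof -
  define c where "c = 1 / real n"
  have row: "(\<Sum>j<n. (A $$ (i,j) - c)\<^sup>2) = (\<Sum>j<n. A $$ (i,j) * A $$ (j,i)) - 2 * c + real n * c\<^sup>2"
    if i: "i < n" for i
  proof -
    have "(\<Sum>j<n. (A $$ (i,j) - c)\<^sup>2) = (\<Sum>j<n. A $$ (i,j) * A $$ (j,i) - 2 * c * A $$ (i,j) + c\<^sup>2)"
      by (rule sum.cong) (use i sym in \<open>auto simp: power2_eq_square algebra_simps\<close>)
    also have "\<dots> = (\<Sum>j<n. A $$ (i,j) * A $$ (j,i)) - 2 * c * (\<Sum>j<n. A $$ (i,j)) + real n * c\<^sup>2"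
      by (simp add: sum.distrib sum_subtractf sum_distrib_left)
    finally show ?thesis using rows[OF i] by simp
  qed
  have "(\<Sum>i<n. \<Sum>j<n. (A $$ (i,j) - c)\<^sup>2)
      = (\<Sum>i<n. \<Sum>j<n. A $$ (i,j) * A $$ (j,i)) - 2 * c * real n + real n * real n * c\<^sup>2"
    by (simp add: row sum.distrib sum_subtractf)
  also have "\<dots> = mat_trace (A * A) - 1"
    using n by (simp add: mat_trace_mult_eq_sum[OF A A] c_def power2_eq_square)
  finally show ?thesis unfolding c_def .
qed

lemma le_of_two_pow_powers_le:
  fixes q b C :: real
  assumes b0: "0 \<le> b" and q0: "0 \<le> q"
    and bound: "\<And>j. q ^ (2 ^ Suc j) \<le> C * b ^ (2 ^ Suc j)"
  shows "q \<le> b"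
proof (rule ccontr)
  assume "\<not> q \<le> b"
  then have qb: "b < q" by simp
  show False
  proof (cases "b = 0")
    case True
    have "q\<^sup>2 \<le> 0" using bound[of 0] True by simp
    moreover have "0 < q\<^sup>2" using qb True by simp
    ultimately show False by simp
  next
    case False
    then have bp: "0 < b" using b0 by simp
    define x where "x = q / b - 1"
    have xp: "0 < x" using qb bp unfolding x_def by (simp add: field_simps)
    obtain j where j: "(\<bar>C\<bar> + 1) / x < 2 ^ j" using real_arch_pow[of 2 "(\<bar>C\<bar> + 1) / x"] by auto
    define K where "K = (2::nat) ^ Suc j"
    have Kx: "\<bar>C\<bar> + 1 < real K * x" using j xp unfolding K_def by (simp add: field_simps)
    have "1 + real K * x \<le> (1 + x) ^ K" by (rule Bernoulli_inequality) (use xp in simp)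
    also have "\<dots> = q ^ K / b ^ K" unfolding x_def by (simp add: power_divide)
    also have "\<dots> \<le> C" using bound[of j] bp unfolding K_def by (simp add: divide_le_eq)
    finally show False using Kx by linarith
  qed
qed

lemma two_pow_power_le_of_square_le:
  fixes t :: "nat \<Rightarrow> real"
  assumes V: "0 \<le> V" and t0: "0 \<le> t 0" and sq: "\<And>j. (t j)\<^sup>2 \<le> V * t (Suc j)"
  shows "t 0 ^ (2 ^ j) \<le> V ^ (2 ^ j - 1) * t j"
proof (induct j)
  case 0 then show ?case by simp
next
  case (Suc j)
  have "t 0 ^ (2 ^ Suc j) = (t 0 ^ (2 ^ j))\<^sup>2" by (simp add: power_mult[symmetric] mult.commute)
  also have "\<dots> \<le> (V ^ (2 ^ j - 1) * t j)\<^sup>2"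
    by (rule power_mono[OF Suc]) (use t0 in simp)
  also have "\<dots> = V ^ (2 * (2 ^ j - 1)) * (t j)\<^sup>2"
    by (simp add: power_mult_distrib power_mult[symmetric] mult.commute)
  also have "\<dots> \<le> V ^ (2 * (2 ^ j - 1)) * (V * t (Suc j))"
    by (rule mult_left_mono[OF sq]) (use V in simp)
  also have "\<dots> = V ^ (2 * (2 ^ j - 1) + 1) * t (Suc j)" by simp
  also have "2 * (2 ^ j - 1) + 1 = (2::nat) ^ Suc j - 1"
    using one_le_power[of "2::nat" j] by (simp only: power_Suc) arith
  finally show ?case .
qed

context doubly_stochastic
begin

lemma gram_pow_mult_vec_square_le:
  assumes n: "0 < n" and v: "v \<in> carrier_vec n" and v0: "(\<Sum>i<n. v $ i) = 0"
  shows "(gram ^\<^sub>m k *\<^sub>v v) \<bullet> (gram ^\<^sub>m k *\<^sub>v v) \<le> (mat_trace (gram ^\<^sub>m (k + k)) - 1) * (v \<bullet> v)"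
proof -
  define A where "A = gram ^\<^sub>m k"
  have A: "A \<in> carrier_mat n n" unfolding A_def by (rule gram_pow_carrier)
  text \<open>Since \<open>v\<close> has mean zero and \<open>A\<close> has unit row sums, \<open>A v = (A - \<one>\<one>\<^sup>T/n) v\<close>.\<close>
  have Av: "(A *\<^sub>v v) $ i = (\<Sum>j<n. (A $$ (i,j) - 1 / real n) * v $ j)" if i: "i < n" for i
  proof -
    have "(A *\<^sub>v v) $ i = (\<Sum>j<n. A $$ (i,j) * v $ j)"
      using A v i by (simp add: scalar_prod_def atLeast0LessThan)
    also have "\<dots> = (\<Sum>j<n. (A $$ (i,j) - 1 / real n) * v $ j) + 1 / real n * (\<Sum>j<n. v $ j)"
      by (simp add: algebra_simps sum_distrib_left sum_subtractf)
    finally show ?thesis using v0 by simp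
  qed
  have "(A *\<^sub>v v) \<bullet> (A *\<^sub>v v) = (\<Sum>i<n. ((A *\<^sub>v v) $ i)\<^sup>2)"
    by (rule scalar_prod_self_eq_sum) (use A v in auto)
  also have "\<dots> \<le> (\<Sum>i<n. (\<Sum>j<n. (A $$ (i,j) - 1 / real n)\<^sup>2) * (\<Sum>j<n. (v $ j)\<^sup>2))"
    by (rule sum_mono) (simp add: Av sum_mult_square_le)
  also have "\<dots> = (\<Sum>i<n. \<Sum>j<n. (A $$ (i,j) - 1 / real n)\<^sup>2) * (v \<bullet> v)"
    by (simp add: sum_distrib_right scalar_prod_self_eq_sum[OF v])
  also have "\<dots> = (mat_trace (A * A) - 1) * (v \<bullet> v)"
    unfolding A_def using gram_pow_symmetric gram_pow_row_sums
    by (subst sum_sq_sub_uniform_eq_trace[OF gram_pow_carrier n]) auto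
  finally show ?thesis unfolding A_def pow_mat_add[OF gram_carrier] .
qed

text \<open>Writing \<open>t\<^sub>j = v\<^sup>T (W\<^sup>T W)\<^bsup>2\<^sup>j\<^esup> v\<close>, Cauchy-Schwarz gives \<open>t\<^sub>j\<^sup>2 \<le> |v|\<^sup>2 t\<^sub>j\<^sub>+\<^sub>1\<close>, and the trace
  bound gives \<open>t\<^sub>j\<^sub>+\<^sub>1 \<le> (n - 1) \<sigma>\<^bsup>4\<^sup>\<cdot>\<^sup>2\<^sup>j\<^esup> |v|\<^sup>2\<close>; together they force \<open>t\<^sub>0 \<le> \<sigma>\<^sup>2 |v|\<^sup>2\<close> as \<open>j \<rightarrow> \<infinity>\<close>.\<close>

theorem second_singular_value_contraction:
  assumes \<sigma>: "second_singular_value W < 1"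
    and v: "v \<in> carrier_vec n" and v0: "(\<Sum>i<n. v $ i) = 0"
  shows "(W *\<^sub>v v) \<bullet> (W *\<^sub>v v) \<le> (second_singular_value W)\<^sup>2 * (v \<bullet> v)"
proof (cases "n = 0")
  case True
  then show ?thesis using W_carrier v by (simp add: scalar_prod_def)
next
  case False
  then have n: "0 < n" by simp
  define s where "s = (second_singular_value W)\<^sup>2"
  define V where "V = v \<bullet> v"
  define t where "t j = v \<bullet> (gram ^\<^sub>m (2 ^ j) *\<^sub>v v)" for j :: nat
  have V0: "0 \<le> V" unfolding V_def by (rule scalar_prod_self_nonneg[OF v])
  have t0: "t 0 = (W *\<^sub>v v) \<bullet> (W *\<^sub>v v)"
    unfolding t_def using gram_quadratic_form[OF v] gram_carrier by simp
  have tSuc: "t (Suc j) = (gram ^\<^sub>m (2 ^ j) *\<^sub>v v) \<bullet> (gram ^\<^sub>m (2 ^ j) *\<^sub>v v)" for j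
    unfolding t_def using gram_pow_mult_vec_square[OF v, of "2 ^ j"] by (simp add: mult_2)
  have sq: "(t j)\<^sup>2 \<le> V * t (Suc j)" for j
  proof -
    have "(t j)\<^sup>2 \<le> V * ((gram ^\<^sub>m (2 ^ j) *\<^sub>v v) \<bullet> (gram ^\<^sub>m (2 ^ j) *\<^sub>v v))"
      unfolding t_def V_def
      by (rule scalar_prod_square_le) (use v mult_mat_vec_carrier[OF gram_pow_carrier v] in auto)
    then show ?thesis unfolding tSuc .
  qed
  have "0 \<le> t 0"
    unfolding t0 by (rule scalar_prod_self_nonneg[of _ n]) (use W_carrier v in simp)
  note chain = two_pow_power_le_of_square_le[OF V0 this sq]
  have tSuc_le: "t (Suc j) \<le> real (n - 1) * s ^ (2 ^ Suc j) * V" for j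
  proof -
    have "t (Suc j) \<le> (mat_trace (gram ^\<^sub>m (2 ^ j + 2 ^ j)) - 1) * V"
      unfolding tSuc V_def by (rule gram_pow_mult_vec_square_le[OF n v v0])
    also have "\<dots> \<le> real (n - 1) * s ^ (2 ^ j + 2 ^ j) * V"
      unfolding s_def by (rule mult_right_mono[OF gram_trace_pow_le[OF n \<sigma>] V0])
    finally show ?thesis by (simp add: mult_2)
  qed
  have "t 0 \<le> s * V"
  proof (rule le_of_two_pow_powers_le[where C = "real (n - 1)"])
    show "0 \<le> s * V" using V0 by (simp add: s_def)
    show "0 \<le> t 0" by fact
    fix j
    have "t 0 ^ (2 ^ Suc j) \<le> V ^ (2 ^ Suc j - 1) * (real (n - 1) * s ^ (2 ^ Suc j) * V)"
      using chain[of "Suc j"] mult_left_mono[OF tSuc_le[of j], of "V ^ (2 ^ Suc j - 1)"] V0 by simp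
    also have "\<dots> = real (n - 1) * (s * V) ^ (2 ^ Suc j)"
    proof -
      define K where "K = (2::nat) ^ Suc j"
      have "V ^ (K - 1) * V = V ^ K" by (rule power_minus_mult) (simp add: K_def)
      then show ?thesis unfolding K_def[symmetric] by (simp add: power_mult_distrib mult_ac)
    qed
    finally show "t 0 ^ (2 ^ Suc j) \<le> real (n - 1) * (s * V) ^ (2 ^ Suc j)" .
  qed
  then show ?thesis unfolding t0 s_def V_def .
qed

end

section \<open>Distance to consensus\<close>

definition col_mean :: "nat \<Rightarrow> real mat \<Rightarrow> nat \<Rightarrow> real" where
  "col_mean n X k = (1 / real n) * (\<Sum>j<n. X $$ (j,k))"

definition disagreement :: "nat \<Rightarrow> nat \<Rightarrow> real mat \<Rightarrow> real" where
  "disagreement n d X = (\<Sum>i<n. \<Sum>k<d. (X $$ (i,k) - col_mean n X k)\<^sup>2)"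

lemma frob_minus_avg_mat:
  assumes "X \<in> carrier_mat n d"
  shows "frob (X - avg_mat X) = sqrt (disagreement n d X)"
  unfolding frob_def disagreement_def col_mean_def using assms
  by (auto simp: avg_mat_def intro!: arg_cong[of _ _ sqrt] sum.cong)

lemma sum_sq_sub_mean_le:
  fixes a :: "nat \<Rightarrow> real"
  shows "(\<Sum>j<n. (a j - (1 / real n) * (\<Sum>l<n. a l))\<^sup>2) \<le> (\<Sum>j<n. (a j - z)\<^sup>2)"
proof (cases "n = 0")
  case True then show ?thesis by simp
next
  case False
  define m where "m = (1 / real n) * (\<Sum>l<n. a l)"
  have sum_a: "(\<Sum>l<n. a l) = real n * m" unfolding m_def using False by simp
  have "(\<Sum>j<n. (a j - z)\<^sup>2) = (\<Sum>j<n. (a j - m)\<^sup>2 + 2 * (m - z) * a j - 2 * (m - z) * m + (m - z)\<^sup>2)"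
    by (rule sum.cong) (auto simp: power2_eq_square algebra_simps)
  also have "\<dots> = (\<Sum>j<n. (a j - m)\<^sup>2) + 2 * (m - z) * (\<Sum>l<n. a l)
      - real n * (2 * (m - z) * m) + real n * (m - z)\<^sup>2"
    by (simp add: sum.distrib sum_subtractf sum_distrib_left)
  also have "\<dots> = (\<Sum>j<n. (a j - m)\<^sup>2) + real n * (m - z)\<^sup>2"
    unfolding sum_a by (simp add: algebra_simps)
  finally show ?thesis unfolding m_def[symmetric] by simp
qed

lemma disagreement_le: "disagreement n d Y \<le> (\<Sum>i<n. \<Sum>k<d. (Y $$ (i,k) - z k)\<^sup>2)"
proof -
  have "disagreement n d Y = (\<Sum>k<d. \<Sum>i<n. (Y $$ (i,k) - col_mean n Y k)\<^sup>2)"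
    unfolding disagreement_def by (rule sum.swap)
  also have "\<dots> \<le> (\<Sum>k<d. \<Sum>i<n. (Y $$ (i,k) - z k)\<^sup>2)"
    unfolding col_mean_def by (intro sum_mono sum_sq_sub_mean_le)
  also have "\<dots> = (\<Sum>i<n. \<Sum>k<d. (Y $$ (i,k) - z k)\<^sup>2)" by (rule sum.swap)
  finally show ?thesis .
qed

lemma proj_step_dist_le:
  assumes ne: "\<Omega> \<noteq> {}" and cv: "convex_vset d \<Omega>" and cl: "closed_vset d \<Omega>"
    and x: "x \<in> carrier_vec d" and c: "c \<in> carrier_vec d" and g: "g \<in> carrier_vec d"
    and gL: "vnorm g \<le> L" and \<alpha>: "0 \<le> \<alpha>"
  shows "vnorm (proj \<Omega> (x - \<alpha> \<cdot>\<^sub>v g) - proj \<Omega> c) \<le> vnorm (x - c) + \<alpha> * L"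
proof -
  have "vnorm (proj \<Omega> (x - \<alpha> \<cdot>\<^sub>v g) - proj \<Omega> c) \<le> vnorm ((x - \<alpha> \<cdot>\<^sub>v g) - c)"
    by (rule proj_nonexpansive[OF ne cv cl]) (use x g c in auto)
  also have "(x - \<alpha> \<cdot>\<^sub>v g) - c = (x - c) + (- \<alpha>) \<cdot>\<^sub>v g"
    using x g c by (intro eq_vecI) auto
  also have "vnorm \<dots> \<le> vnorm (x - c) + \<alpha> * vnorm g"
    using vnorm_add_le[of "x - c" d "(- \<alpha>) \<cdot>\<^sub>v g"] vnorm_smult[OF g, of "- \<alpha>"] x c g \<alpha> by simp
  also have "\<dots> \<le> vnorm (x - c) + \<alpha> * L" using gL \<alpha> by (simp add: mult_left_mono)
  finally show ?thesis .
qed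

context doubly_stochastic
begin

lemma col_mean_mult: "k < d \<Longrightarrow> Y \<in> carrier_mat n d \<Longrightarrow> col_mean n (W * Y) k = col_mean n Y k"
  unfolding col_mean_def using W_carrier col_sums
  by (simp add: scalar_prod_def atLeast0LessThan sum_distrib_right[symmetric]
      sum.swap[of _ "{..<n}" "{..<n}"] mult.commute[of "W $$ _"] flip: sum_distrib_left)

lemma disagreement_mult_le:
  assumes \<sigma>: "second_singular_value W < 1" and Y: "Y \<in> carrier_mat n d"
  shows "disagreement n d (W * Y) \<le> (second_singular_value W)\<^sup>2 * disagreement n d Y"
proof -
  define u where "u k = vec n (\<lambda>j. Y $$ (j,k) - col_mean n Y k)" for k
  have u: "u k \<in> carrier_vec n" for k unfolding u_def by simp
  have u_sum: "(\<Sum>j<n. u k $ j) = 0" for k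
    unfolding u_def col_mean_def by (cases "n = 0") (simp_all add: sum_subtractf)
  have u_square: "u k \<bullet> u k = (\<Sum>i<n. (Y $$ (i,k) - col_mean n Y k)\<^sup>2)" for k
    unfolding scalar_prod_self_eq_sum[OF u] by (simp add: u_def)
  text \<open>Since \<open>W\<close> has unit row sums, centring the columns commutes with multiplication by \<open>W\<close>.\<close>
  have Wu: "(W *\<^sub>v u k) $ i = (W * Y) $$ (i,k) - col_mean n (W * Y) k" if "i < n" "k < d" for i k
  proof -
    have "(W *\<^sub>v u k) $ i = (\<Sum>j<n. W $$ (i,j) * Y $$ (j,k)) - (\<Sum>j<n. W $$ (i,j)) * col_mean n Y k"
      using W_carrier that
      by (simp add: u_def scalar_prod_def atLeast0LessThan algebra_simps sum_subtractf sum_distrib_left)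
    then show ?thesis
      using W_carrier Y that row_sums col_mean_mult by (simp add: scalar_prod_def atLeast0LessThan)
  qed
  have "disagreement n d (W * Y) = (\<Sum>k<d. (W *\<^sub>v u k) \<bullet> (W *\<^sub>v u k))"
    unfolding disagreement_def
    by (subst sum.swap, intro sum.cong refl)
      (simp add: scalar_prod_self_eq_sum[OF mult_mat_vec_carrier[OF W_carrier u]] Wu)
  also have "\<dots> \<le> (\<Sum>k<d. (second_singular_value W)\<^sup>2 * (u k \<bullet> u k))"
    by (intro sum_mono second_singular_value_contraction[OF \<sigma> u u_sum])
  also have "\<dots> = (second_singular_value W)\<^sup>2 * disagreement n d Y"
    unfolding disagreement_def u_square sum_distrib_left[symmetric] by (subst sum.swap) simp
  finally show ?thesis .
qed

lemma disagreement_step: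
  assumes \<sigma>: "second_singular_value W < 1"
    and X: "X \<in> carrier_mat n d" and G: "G \<in> carrier_mat n d"
    and GL: "\<And>i. i < n \<Longrightarrow> vnorm (row G i) \<le> L" and \<alpha>: "0 \<le> \<alpha>" and L: "0 \<le> L"
    and ne: "\<Omega> \<noteq> {}" and cv: "convex_vset d \<Omega>" and cl: "closed_vset d \<Omega>"
  shows "sqrt (disagreement n d (W * mat_of_rows d (map (\<lambda>i. proj \<Omega> (row X i - \<alpha> \<cdot>\<^sub>v row G i)) [0..<n])))
    \<le> second_singular_value W * (sqrt (disagreement n d X) + \<alpha> * L * sqrt (real n))"
proof -
  define p where "p i = proj \<Omega> (row X i - \<alpha> \<cdot>\<^sub>v row G i)" for i
  define Y where "Y = mat_of_rows d (map p [0..<n])"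
  have Y: "Y \<in> carrier_mat n d" unfolding Y_def by (simp add: mat_of_rows_def)
  have p: "p i \<in> carrier_vec d" if "i < n" for i
    using proj_nearest(1)[OF ne cv cl] convex_vset_subset[OF cv] X G that unfolding p_def by auto
  define c where "c = vec d (col_mean n X)"
  have c: "c \<in> carrier_vec d" unfolding c_def by simp
  have c_proj: "proj \<Omega> c \<in> carrier_vec d"
    using proj_nearest(1)[OF ne cv cl c] convex_vset_subset[OF cv] by auto
  define a where "a i = vnorm (row X i - c)" for i
  have dX: "sqrt (disagreement n d X) = L2_set a {..<n}"
    unfolding L2_set_def disagreement_def a_def
    using X by (intro arg_cong[of _ _ sqrt] sum.cong refl) (simp add: vnorm_diff_eq[of _ d] c_def sum_nonneg)
  have "disagreement n d Y \<le> (\<Sum>i<n. \<Sum>k<d. (Y $$ (i,k) - proj \<Omega> c $ k)\<^sup>2)"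
    by (rule disagreement_le)
  also have "\<dots> = (\<Sum>i<n. (vnorm (p i - proj \<Omega> c))\<^sup>2)"
    using p c_proj by (intro sum.cong refl) (simp add: Y_def mat_of_rows_index vnorm_diff_eq[of _ d] sum_nonneg)
  finally have "sqrt (disagreement n d Y) \<le> L2_set (\<lambda>i. vnorm (p i - proj \<Omega> c)) {..<n}"
    unfolding L2_set_def by simp
  also have "\<dots> \<le> L2_set (\<lambda>i. a i + \<alpha> * L) {..<n}"
    unfolding p_def a_def using X G GL \<alpha> vnorm_nonneg
    by (intro L2_set_mono proj_step_dist_le[OF ne cv cl _ c]) auto
  also have "\<dots> \<le> sqrt (disagreement n d X) + \<alpha> * L * sqrt (real n)"
    using L2_set_triangle_ineq[of a "\<lambda>_. \<alpha> * L" "{..<n}"] \<alpha> L by (simp add: dX L2_set_constant algebra_simps)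
  finally have dY: "sqrt (disagreement n d Y) \<le> sqrt (disagreement n d X) + \<alpha> * L * sqrt (real n)" .
  have "sqrt (disagreement n d (W * Y)) \<le> sqrt ((second_singular_value W)\<^sup>2 * disagreement n d Y)"
    using disagreement_mult_le[OF \<sigma> Y] by simp
  also have "\<dots> = second_singular_value W * sqrt (disagreement n d Y)"
    using second_singular_value_nonneg by (simp add: real_sqrt_mult)
  also have "\<dots> \<le> second_singular_value W * (sqrt (disagreement n d X) + \<alpha> * L * sqrt (real n))"
    by (rule mult_left_mono[OF dY second_singular_value_nonneg])
  finally show ?thesis unfolding Y_def p_def .
qed

end

section \<open>Discounted sums of step sizes\<close>

lemma geometric_tail_sum_le:
  fixes \<sigma> :: real
  assumes "0 \<le> \<sigma>" "\<sigma> < 1"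
  shows "(\<Sum>k<t. \<sigma> ^ (t - k)) \<le> 1 / (1 - \<sigma>)"
proof -
  have "(\<Sum>k<t. \<sigma> ^ (t - k)) = (\<Sum>m\<in>{1..t}. \<sigma> ^ m)"
    by (rule sum.reindex_bij_witness[of _ "\<lambda>m. t - m" "\<lambda>k. t - k"]) auto
  also have "\<dots> \<le> (\<Sum>m<Suc t. \<sigma> ^ m)"
    by (rule sum_mono2) (use assms in auto)
  also have "\<dots> = (1 - \<sigma> ^ Suc t) / (1 - \<sigma>)"
    by (subst sum_gp_strict) (use assms in auto)
  also have "\<dots> \<le> 1 / (1 - \<sigma>)"
    using assms by (simp add: divide_right_mono)
  finally show ?thesis .
qed

lemma power_le_exp_minus:
  fixes \<sigma> :: real
  assumes "0 \<le> \<sigma>"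
  shows "\<sigma> ^ m \<le> exp (- (1 - \<sigma>) * real m)"
proof -
  have "\<sigma> ^ m \<le> exp (\<sigma> - 1) ^ m"
    using exp_ge_add_one_self[of "\<sigma> - 1"] assms by (intro power_mono) auto
  also have "\<dots> = exp (- (1 - \<sigma>) * real m)" by (simp add: exp_of_nat_mult[symmetric] mult.commute)
  finally show ?thesis .
qed

lemma discounted_sum_recent_le:
  fixes \<alpha> :: "nat \<Rightarrow> real"
  assumes "0 \<le> \<sigma>" "\<sigma> < 1" and "decseq \<alpha>" and "0 \<le> \<alpha> h"
  shows "(\<Sum>k\<in>{h..<t}. \<sigma> ^ (t - k) * \<alpha> k) \<le> \<alpha> h / (1 - \<sigma>)"
proof -
  have "(\<Sum>k\<in>{h..<t}. \<sigma> ^ (t - k) * \<alpha> k) \<le> (\<Sum>k\<in>{h..<t}. \<sigma> ^ (t - k) * \<alpha> h)"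
    using assms by (intro sum_mono mult_left_mono) (auto simp: decseqD)
  also have "\<dots> \<le> (\<Sum>k<t. \<sigma> ^ (t - k)) * \<alpha> h"
    unfolding sum_distrib_right[symmetric]
    by (intro mult_right_mono sum_mono2) (use assms in auto)
  also have "\<dots> \<le> \<alpha> h / (1 - \<sigma>)"
    using mult_right_mono[OF geometric_tail_sum_le[OF assms(1,2)] assms(4)] by simp
  finally show ?thesis .
qed

lemma discounted_sum_early_le:
  fixes \<alpha> :: "nat \<Rightarrow> real"
  assumes "0 \<le> \<sigma>" "\<sigma> \<le> 1" and "decseq \<alpha>" and "\<And>k. 0 \<le> \<alpha> k" and "h \<le> t"
  shows "(\<Sum>k<h. \<sigma> ^ (t - k) * \<alpha> k) \<le> real h * \<sigma> ^ (t - h) * \<alpha> 0"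
proof -
  have "(\<Sum>k<h. \<sigma> ^ (t - k) * \<alpha> k) \<le> (\<Sum>k<h. \<sigma> ^ (t - h) * \<alpha> 0)"
    using assms by (intro sum_mono mult_mono power_decreasing) (auto simp: decseqD)
  then show ?thesis by simp
qed

lemma discounted_step_sum_le:
  fixes \<alpha> :: "nat \<Rightarrow> real" and \<sigma> C :: real
  assumes \<sigma>0: "0 \<le> \<sigma>" and \<sigma>1: "\<sigma> < 1" and pos: "\<And>t. 0 < \<alpha> t" and dec: "decseq \<alpha>"
    and half: "\<And>t. \<alpha> (t div 2) \<le> C * \<alpha> t"
    and t: "2 / (1 - \<sigma>) * ln ((1 - \<sigma>) * real t * \<alpha> 0 / (C * \<alpha> t)) \<le> real t"
  shows "(\<Sum>k<t. \<sigma> ^ (t - k) * \<alpha> k) \<le> 2 * C * \<alpha> t / (1 - \<sigma>)"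
proof -
  define h where "h = t div 2"
  have "1 \<le> C" using half[of 0] pos[of 0] by (simp add: mult_le_cancel_right1)
  then have Ca: "0 < C * \<alpha> t" using pos[of t] by simp
  have gap: "0 < 1 - \<sigma>" using \<sigma>1 by simp
  have split: "(\<Sum>k<t. \<sigma> ^ (t - k) * \<alpha> k)
      = (\<Sum>k<h. \<sigma> ^ (t - k) * \<alpha> k) + (\<Sum>k\<in>{h..<t}. \<sigma> ^ (t - k) * \<alpha> k)"
    unfolding h_def lessThan_atLeast0 by (simp add: sum.atLeastLessThan_concat)
  have "(\<Sum>k\<in>{h..<t}. \<sigma> ^ (t - k) * \<alpha> k) \<le> \<alpha> h / (1 - \<sigma>)"
    by (rule discounted_sum_recent_le[OF \<sigma>0 \<sigma>1 dec less_imp_le[OF pos]])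
  also have "\<dots> \<le> C * \<alpha> t / (1 - \<sigma>)"
    using half[of t] gap unfolding h_def by (simp add: divide_right_mono)
  finally have recent: "(\<Sum>k\<in>{h..<t}. \<sigma> ^ (t - k) * \<alpha> k) \<le> C * \<alpha> t / (1 - \<sigma>)" .
  have "real h * \<sigma> ^ (t - h) * \<alpha> 0 \<le> C * \<alpha> t / (1 - \<sigma>)"
  proof (cases "h = 0")
    case True then show ?thesis using Ca gap by simp
  next
    case False
    then have "0 < real t" unfolding h_def by simp
    define R where "R = (1 - \<sigma>) * real t * \<alpha> 0 / (C * \<alpha> t)"
    have R: "0 < R" unfolding R_def using gap \<open>0 < real t\<close> pos Ca by simp
    have h_le: "real h \<le> real t / 2" and h_ge: "real t / 2 \<le> real (t - h)"
      unfolding h_def by linarith+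
    have "\<sigma> ^ (t - h) \<le> exp (- (1 - \<sigma>) * real (t - h))" by (rule power_le_exp_minus[OF \<sigma>0])
    also have "\<dots> \<le> exp (- ln R)"
    proof -
      have "2 / (1 - \<sigma>) * ln R \<le> real t" using t unfolding R_def .
      then have "ln R \<le> (1 - \<sigma>) * (real t / 2)"
        using gap by (simp add: divide_le_eq mult.commute)
      also have "\<dots> \<le> (1 - \<sigma>) * real (t - h)" using gap h_ge by (intro mult_left_mono) auto
      finally show ?thesis by (simp add: algebra_simps)
    qed
    also have "\<dots> = 1 / R" using R by (simp add: exp_minus inverse_eq_divide)
    finally have "\<sigma> ^ (t - h) \<le> 1 / R" .
    then have "real h * \<sigma> ^ (t - h) * \<alpha> 0 \<le> real t / 2 * (1 / R) * \<alpha> 0"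
      using pos[of 0] \<sigma>0 h_le by (intro mult_right_mono mult_mono) auto
    also have "\<dots> = C * \<alpha> t / (2 * (1 - \<sigma>))"
      unfolding R_def using gap \<open>0 < real t\<close> pos[of 0] Ca by (simp add: field_simps)
    also have "\<dots> \<le> C * \<alpha> t / (1 - \<sigma>)" using Ca gap by (intro divide_left_mono) auto
    finally show ?thesis .
  qed
  then have "(\<Sum>k<h. \<sigma> ^ (t - k) * \<alpha> k) \<le> C * \<alpha> t / (1 - \<sigma>)"
    using discounted_sum_early_le[OF \<sigma>0 less_imp_le[OF \<sigma>1] dec less_imp_le[OF pos], of h t]
    unfolding h_def by simp
  then show ?thesis unfolding split using recent by simp
qed

section \<open>The consensus error of projected subgradient iterations\<close>

lemma projected_iterates_carrier:
  assumes "W \<in> carrier_mat n n" and "x 0 \<in> carrier_mat n d"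
    and "\<And>t. x (Suc t) = W * mat_of_rows d (map (p t) [0..<n])"
  shows "x t \<in> carrier_mat n d"
  by (induct t) (use assms in \<open>simp_all add: mat_of_rows_def\<close>)

lemma le_discounted_sum_of_recursion:
  fixes e \<alpha> :: "nat \<Rightarrow> real"
  assumes "e 0 \<le> 0" and "0 \<le> \<sigma>" and step: "\<And>t. e (Suc t) \<le> \<sigma> * (e t + c * \<alpha> t)"
  shows "e t \<le> c * (\<Sum>k<t. \<sigma> ^ (t - k) * \<alpha> k)"
proof (induct t)
  case 0 then show ?case using assms(1) by simp
next
  case (Suc t)
  have "e (Suc t) \<le> \<sigma> * (c * (\<Sum>k<t. \<sigma> ^ (t - k) * \<alpha> k) + c * \<alpha> t)"
    using step[of t] mult_left_mono[OF add_right_mono[OF Suc, of "c * \<alpha> t"], of \<sigma>] \<open>0 \<le> \<sigma>\<close> by linarith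
  also have "\<dots> = c * (\<Sum>k<Suc t. \<sigma> ^ (Suc t - k) * \<alpha> k)"
    by (simp add: Suc_diff_le sum_distrib_left algebra_simps)
  finally show ?case .
qed

lemma disagreement_eq_0_if_rows_eq:
  assumes "X \<in> carrier_mat n d" and "\<And>i. i < n \<Longrightarrow> row X i = v"
  shows "disagreement n d X = 0"
proof -
  have entry: "X $$ (i,k) = v $ k" if "i < n" "k < d" for i k
    using assms that by (metis index_row(1) carrier_matD)
  show ?thesis
  proof (cases "n = 0")
    case False
    then have "col_mean n X k = v $ k" if "k < d" for k
      using that by (simp add: col_mean_def entry)
    then show ?thesis unfolding disagreement_def by (simp add: entry)
  qed (simp add: disagreement_def)
qed

context doubly_stochastic
begin

lemma consensus_distance_le_discounted_sum:
  assumes \<sigma>: "second_singular_value W < 1"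
    and ne: "\<Omega> \<noteq> {}" and cv: "convex_vset d \<Omega>" and cl: "closed_vset d \<Omega>"
    and \<alpha>: "\<And>t. 0 \<le> \<alpha> t" and L: "0 \<le> L"
    and g: "\<And>t. g t \<in> carrier_mat n d" and gL: "\<And>t i. i < n \<Longrightarrow> vnorm (row (g t) i) \<le> L"
    and x0: "x 0 \<in> carrier_mat n d" and x0_rows: "\<And>i. i < n \<Longrightarrow> row (x 0) i = v"
    and x_Suc: "\<And>t. x (Suc t) = W * mat_of_rows d
      (map (\<lambda>i. proj \<Omega> (row (x t) i - \<alpha> t \<cdot>\<^sub>v row (g t) i)) [0..<n])"
  shows "frob (x t - avg_mat (x t)) \<le>
    L * sqrt (real n) * (\<Sum>k<t. (second_singular_value W) ^ (t - k) * \<alpha> k)"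
proof -
  have x: "x t \<in> carrier_mat n d" for t
    by (rule projected_iterates_carrier[where x = x, OF W_carrier x0 x_Suc])
  show ?thesis
    unfolding frob_minus_avg_mat[OF x]
  proof (rule le_discounted_sum_of_recursion[OF _ second_singular_value_nonneg])
    show "sqrt (disagreement n d (x 0)) \<le> 0"
      using disagreement_eq_0_if_rows_eq[OF x0 x0_rows] by simp
    show "sqrt (disagreement n d (x (Suc t))) \<le>
        second_singular_value W * (sqrt (disagreement n d (x t)) + L * sqrt (real n) * \<alpha> t)" for t
      unfolding x_Suc using disagreement_step[OF \<sigma> x g gL \<alpha> L ne cv cl] by (simp add: mult_ac)
  qed
qed

end

theorem consensus_distance_bound:
  assumes subgrad_bound: "\<forall>i<n. \<forall>u\<in>carrier_vec d. \<forall>s. subgrad d (f i) u s \<longrightarrow> vnorm s \<le> L"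
    and ne: "\<Omega> \<noteq> {}" and cv: "convex_vset d \<Omega>" and cl: "closed_vset d \<Omega>"
    and W: "doubly_stochastic_pos n W" and \<sigma>: "second_singular_value W < 1"
    and pos: "\<forall>t. \<alpha> t > 0" and dec: "\<forall>t. \<alpha> (Suc t) \<le> \<alpha> t"
    and half: "\<forall>t::nat. \<alpha> (t div 2) \<le> C\<alpha>' * \<alpha> t"
    and g: "\<forall>t. g t \<in> carrier_mat n d \<and> (\<forall>i<n. subgrad d (f i) (row (x t) i) (row (g t) i))"
    and x0: "x 0 \<in> carrier_mat n d" and x0_rows: "\<exists>v\<in>\<Omega>. \<forall>i<n. row (x 0) i = v"
    and x_Suc: "\<forall>t. x (Suc t) = W * mat_of_rows d
      (map (\<lambda>i. proj \<Omega> (row (x t) i - \<alpha> t \<cdot>\<^sub>v row (g t) i)) [0..<n])"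
    and t: "2 / (1 - second_singular_value W) *
      ln ((1 - second_singular_value W) * real t * (SUP s. \<alpha> s) / (C\<alpha>' * \<alpha> t)) \<le> real t"
  shows "frob (x t - avg_mat (x t)) \<le>
    2 * C\<alpha>' * \<alpha> t * L * sqrt (real n) / (1 - second_singular_value W)"
proof -
  interpret doubly_stochastic W n
    using W by unfold_locales (simp_all add: doubly_stochastic_pos_def)
  define \<sigma>' where "\<sigma>' = second_singular_value W"
  have x: "x t \<in> carrier_mat n d" for t
    by (rule projected_iterates_carrier[where x = x, OF W_carrier x0]) (use x_Suc in blast)
  have gL: "vnorm (row (g t) i) \<le> L" if "i < n" for t i
  proof -
    have "row (x t) i \<in> carrier_vec d" using x[of t] by (simp add: row_def)
    then show ?thesis using subgrad_bound g that by blast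
  qed
  have dec': "decseq \<alpha>" using dec by (simp add: decseq_Suc_iff)
  have "(SUP s. \<alpha> s) = \<alpha> 0"
    by (rule cSup_eq_maximum) (auto intro: decseqD[OF dec'])
  then have sum_le: "(\<Sum>k<t. \<sigma>' ^ (t - k) * \<alpha> k) \<le> 2 * C\<alpha>' * \<alpha> t / (1 - \<sigma>')"
    using discounted_step_sum_le[OF second_singular_value_nonneg \<sigma> _ dec'] pos half t
    unfolding \<sigma>'_def by simp
  show ?thesis
  proof (cases "n = 0")
    case True
    then show ?thesis using frob_minus_avg_mat[OF x] by (simp add: disagreement_def)
  next
    case False
    then have L: "0 \<le> L" using gL[of 0 0] vnorm_nonneg order_trans by blast
    obtain v where v: "\<forall>i<n. row (x 0) i = v" using x0_rows by blast
    have "frob (x t - avg_mat (x t)) \<le> L * sqrt (real n) * (\<Sum>k<t. \<sigma>' ^ (t - k) * \<alpha> k)"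
      unfolding \<sigma>'_def
      by (rule consensus_distance_le_discounted_sum[where x = x and g = g and \<alpha> = \<alpha> and v = v])
        (use \<sigma> ne cv cl pos L g gL x0 v x_Suc in \<open>auto intro: less_imp_le\<close>)
    also have "\<dots> \<le> L * sqrt (real n) * (2 * C\<alpha>' * \<alpha> t / (1 - \<sigma>'))"
      using L by (intro mult_left_mono[OF sum_le]) auto
    finally show ?thesis by (simp add: \<sigma>'_def mult_ac)
  qed
qed

theorem lemma3:
  shows "\<exists>c::real. c > 0 \<and>
   (\<forall>(n::nat) (d::nat) (W::real mat) (f::nat \<Rightarrow> real vec \<Rightarrow> real) (L::real)
      (\<Omega>::real vec set) (\<alpha>::nat \<Rightarrow> real) (C\<alpha>::real) (C\<alpha>'::real)
      (x::nat \<Rightarrow> real mat) (g::nat \<Rightarrow> real mat).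
     (\<forall>i<n. convex_vfun d (f i)) \<and>
     (\<forall>i<n. \<forall>u\<in>carrier_vec d. \<forall>s. subgrad d (f i) u s \<longrightarrow> vnorm s \<le> L) \<and>
     \<Omega> \<noteq> {} \<and> convex_vset d \<Omega> \<and> closed_vset d \<Omega> \<and>
     doubly_stochastic_pos n W \<and> strongly_connected_mat n W \<and>
     second_singular_value W < 1 \<and>
     (\<forall>t. \<alpha> t > 0) \<and> (\<forall>t. \<alpha> (Suc t) \<le> \<alpha> t) \<and>
     summable (\<lambda>t. (\<alpha> t)\<^sup>2) \<and> \<not> summable \<alpha> \<and>
     (\<forall>t::nat. (\<Sum>k\<in>{1..t}. \<alpha> k) \<le> C\<alpha> * (\<Sum>k\<in>{nat \<lceil>real t / 2\<rceil>..t}. \<alpha> k)) \<and>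
     (\<forall>t::nat. \<alpha> (t div 2) \<le> C\<alpha>' * \<alpha> t) \<and>
     (\<forall>t. g t \<in> carrier_mat n d \<and> (\<forall>i<n. subgrad d (f i) (row (x t) i) (row (g t) i))) \<and>
     x 0 \<in> carrier_mat n d \<and> (\<exists>v\<in>\<Omega>. \<forall>i<n. row (x 0) i = v) \<and>
     (\<forall>t. x (Suc t) = W * mat_of_rows d
            (map (\<lambda>i. proj \<Omega> (row (x t) i - \<alpha> t \<cdot>\<^sub>v row (g t) i)) [0..<n]))
     \<longrightarrow>
     (\<forall>t::nat.
        real t \<ge> c / (1 - second_singular_value W) *
          ln ((1 - second_singular_value W) * real t * (SUP s. \<alpha> s) / (C\<alpha>' * \<alpha> t))
        \<longrightarrow>
        frob (x t - avg_mat (x t)) \<le>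
          2 * C\<alpha>' * \<alpha> t * L * sqrt (real n) / (1 - second_singular_value W)))"
proof (intro exI[of _ "2::real"] conjI allI impI, goal_cases)
  case 1
  show ?case by simp
next
  case (2 n d W f L \<Omega> \<alpha> C\<alpha> C\<alpha>' x g t)
  then show ?case
    by (elim conjE) (rule consensus_distance_bound, assumption+)
qed

end
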